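(* Let $n\geq 2$ and let $V$ be a simple weight $\mathfrak{gl}_n$-module such that $$(E_{l,l}-E_{l,j}E_{j,l}+E_{j,j}E_{l,l})\cdot V=0\quad\text{for all } l,j\in\{1,\dots,n\},\ l\neq j.$$ Then $V\cong N(\lambda)$ for some $\lambda\in\mathbb{C}^n$.
   Context: $E_{l,j}$ ($1\le l,j\le n$) are the matrix units of $\mathfrak{gl}_n$; a weight module is one on which all $E_{j,j}$ act diagonalizably. Let $e_1,\dots,e_n$ be the standard basis of $\mathbb{Z}^n$, and for $\mu\in\mathbb{C}^n$ let $|\mu|=\sum_j\mu_j$. For $\lambda\in\mathbb{C}^n$ let $S(\lambda)=X_1\times\dots\times X_n$, where $X_j=\lambda_j+\mathbb{Z}$ if $\lambda_j\notin\mathbb{Z}$, $X_j=\mathbb{Z}_{\ge 0}$ if $\lambda_j\in\mathbb{Z}_{\ge0}$, and $X_j=\{-1,-2,\dots\}$ if $\lambda_j\in\{-1,-2,\dots\}$. Let $W(\lambda)$ be the vector space with basis $\{y(\lambda'):\lambda'\in S(\lambda)\}$, with the convention $y(\mu)=0$ for $\mu\notin S(\lambda)$, and let $\mathfrak{gl}_n$ act by $E_{l,j}\,y(\lambda')=\lambda'_j\,y(\lambda'-e_j+e_l)$. Then $N(\lambda)=\mathrm{span}\{y(\lambda'):\lambda'\in S(\lambda),\ |\lambda'|=|\lambda|\}$ is a $\mathfrak{gl}_n$-submodule (a simple one). *)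

theory Defs
  imports Complex_Main
begin

text \<open>A gl_n-module: a complex vector space (the whole type 'v, with scalar
multiplication sc) together with operators E l j (1 <= l,j <= n) representing
the matrix units, which are complex-linear and satisfy the gl_n commutation
relations [E_ij, E_km] = delta_jk E_im - delta_mi E_kj.\<close>

definition glrep :: "nat \<Rightarrow> (complex \<Rightarrow> 'v::ab_group_add \<Rightarrow> 'v) \<Rightarrow> (nat \<Rightarrow> nat \<Rightarrow> 'v \<Rightarrow> 'v) \<Rightarrow> bool" where
  "glrep n sc E \<longleftrightarrow> vector_space sc \<and>
     (\<forall>l\<in>{1..n}. \<forall>j\<in>{1..n}. Vector_Spaces.linear sc sc (E l j)) \<and>
     (\<forall>i\<in>{1..n}. \<forall>j\<in>{1..n}. \<forall>k\<in>{1..n}. \<forall>m\<in>{1..n}. \<forall>v.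
        E i j (E k m v) - E k m (E i j v) =
        (if j = k then E i m v else 0) - (if m = i then E k j v else 0))"

definition gl_submodule :: "nat \<Rightarrow> (complex \<Rightarrow> 'v::ab_group_add \<Rightarrow> 'v) \<Rightarrow> (nat \<Rightarrow> nat \<Rightarrow> 'v \<Rightarrow> 'v) \<Rightarrow> 'v set \<Rightarrow> bool" where
  "gl_submodule n sc E W \<longleftrightarrow> module.subspace sc W \<and>
     (\<forall>l\<in>{1..n}. \<forall>j\<in>{1..n}. \<forall>w\<in>W. E l j w \<in> W)"

definition simple_gl_module :: "nat \<Rightarrow> (complex \<Rightarrow> 'v::ab_group_add \<Rightarrow> 'v) \<Rightarrow> (nat \<Rightarrow> nat \<Rightarrow> 'v \<Rightarrow> 'v) \<Rightarrow> bool" where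
  "simple_gl_module n sc E \<longleftrightarrow> (\<exists>v::'v. v \<noteq> 0) \<and>
     (\<forall>W. gl_submodule n sc E W \<longrightarrow> W = {0} \<or> W = UNIV)"

definition weight_gl_module :: "nat \<Rightarrow> (complex \<Rightarrow> 'v::ab_group_add \<Rightarrow> 'v) \<Rightarrow> (nat \<Rightarrow> nat \<Rightarrow> 'v \<Rightarrow> 'v) \<Rightarrow> bool" where
  "weight_gl_module n sc E \<longleftrightarrow>
     (\<forall>j\<in>{1..n}. module.span sc {v. \<exists>c. E j j v = sc c v} = UNIV)"

text \<open>Vectors in C^n are functions nat => complex, coordinates 1..n.\<close>
definition Xset :: "complex \<Rightarrow> complex set" where
  "Xset a = (if a \<in> \<nat> then {of_nat k | k. True}
             else if a \<in> \<int> then {- of_nat (Suc k) | k. True}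
             else {a + of_int k | k. True})"

definition Sset :: "nat \<Rightarrow> (nat \<Rightarrow> complex) \<Rightarrow> (nat \<Rightarrow> complex) set" where
  "Sset n lam = {mu. (\<forall>j\<in>{1..n}. mu j \<in> Xset (lam j)) \<and> (\<forall>j. j \<notin> {1..n} \<longrightarrow> mu j = 0)}"

definition wsum :: "nat \<Rightarrow> (nat \<Rightarrow> complex) \<Rightarrow> complex" where
  "wsum n mu = (\<Sum>j=1..n. mu j)"

definition shift :: "(nat \<Rightarrow> complex) \<Rightarrow> nat \<Rightarrow> nat \<Rightarrow> (nat \<Rightarrow> complex)" where
  "shift mu j l = (\<lambda>i. mu i + (if i = j then 1 else 0) - (if i = l then 1 else 0))"

text \<open>N(lambda): elements are coefficient functions f (f mu = coefficient of y(mu)),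
finitely supported on {mu in S(lambda). |mu| = |lambda|}.\<close>
definition Nspace :: "nat \<Rightarrow> (nat \<Rightarrow> complex) \<Rightarrow> ((nat \<Rightarrow> complex) \<Rightarrow> complex) set" where
  "Nspace n lam = {f. finite {mu. f mu \<noteq> 0} \<and>
      (\<forall>mu. f mu \<noteq> 0 \<longrightarrow> mu \<in> Sset n lam \<and> wsum n mu = wsum n lam)}"

text \<open>Action E_{l,j} y(mu') = mu'_j y(mu' - e_j + e_l) (with y(mu) = 0 for mu outside S),
written on coefficient functions.\<close>
definition NE :: "nat \<Rightarrow> (nat \<Rightarrow> complex) \<Rightarrow> nat \<Rightarrow> nat \<Rightarrow> ((nat \<Rightarrow> complex) \<Rightarrow> complex) \<Rightarrow> ((nat \<Rightarrow> complex) \<Rightarrow> complex)" where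
  "NE n lam l j f = (\<lambda>mu. if mu \<in> Sset n lam then shift mu j l j * f (shift mu j l) else 0)"

definition iso_to_N :: "nat \<Rightarrow> (complex \<Rightarrow> 'v::ab_group_add \<Rightarrow> 'v) \<Rightarrow> (nat \<Rightarrow> nat \<Rightarrow> 'v \<Rightarrow> 'v) \<Rightarrow> (nat \<Rightarrow> complex) \<Rightarrow> bool" where
  "iso_to_N n sc E lam \<longleftrightarrow> (\<exists>\<phi> :: 'v \<Rightarrow> ((nat \<Rightarrow> complex) \<Rightarrow> complex).
      (\<forall>u v mu. \<phi> (u + v) mu = \<phi> u mu + \<phi> v mu) \<and>
      (\<forall>c v mu. \<phi> (sc c v) mu = c * \<phi> v mu) \<and>
      bij_betw \<phi> UNIV (Nspace n lam) \<and>
      (\<forall>l\<in>{1..n}. \<forall>j\<in>{1..n}. \<forall>v. \<phi> (E l j v) = NE n lam l j (\<phi> v)))"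

end

theory Submission
  imports Defs "HOL-Library.Function_Algebras"
begin

text \<open>
  Fix a weight vector \<open>v\<^sub>0\<close> of weight \<open>\<lambda>\<close>; it exists because the commuting operators \<open>E\<^sub>j\<^sub>j\<close> are
  diagonalizable. A word \<open>X\<close> in the \<open>E\<^sub>l\<^sub>j\<close> acts on \<open>N(\<lambda>)\<close> by \<open>y(\<mu>) \<mapsto> c\<^sub>X(\<mu>) y(\<mu> + wt X)\<close>.
  The heart of the proof is that a word of weight zero acts on every weight vector of weight \<open>\<mu>\<close>
  by the same scalar \<open>c\<^sub>X(\<mu>)\<close>. If the letter applied first is \<open>E\<^sub>l\<^sub>j\<close> with \<open>l \<noteq> j\<close>, some later
  letter \<open>E\<^sub>a\<^sub>l\<close> with \<open>a \<noteq> l\<close> lowers \<open>l\<close> again. Commute it down to \<open>E\<^sub>l\<^sub>j\<close>; the correction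
  terms are shorter words. Then contract the adjacent pair by the quadratic relation, which on
  weight vectors reads \<open>E\<^sub>a\<^sub>l E\<^sub>l\<^sub>j = (1 + \<mu>\<^sub>l) E\<^sub>a\<^sub>j\<close>.

  By simplicity, \<open>V\<close> is spanned by the vectors \<open>X v\<^sub>0\<close>. The map \<open>\<Sum> r\<^sub>X X v\<^sub>0 \<mapsto> \<Sum> r\<^sub>X X y(\<lambda>)\<close> is
  well defined: if \<open>\<Sum> r\<^sub>X X v\<^sub>0 = 0\<close>, then each weight component vanishes, and applying a word
  that leads back from that weight to \<open>\<lambda>\<close> with nonzero coefficient turns the component into a
  multiple of \<open>v\<^sub>0\<close>. The map is injective by simplicity. It is surjective because any two
  points of \<open>S(\<lambda>)\<close> with the same coordinate sum are joined by such a word.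
\<close>

lemma of_int_in_Nats_iff: "(of_int k :: 'a::ring_char_0) \<in> \<nat> \<longleftrightarrow> 0 \<le> k"
  by (auto simp: Nats_altdef1)

lemma Nats_minus_one:
  assumes "(x :: 'a::ring_1) \<in> \<nat>" "x \<noteq> 0"
  shows "x - 1 \<in> \<nat>"
proof -
  obtain m where "x = of_nat (Suc m)"
    using assms by (metis Nats_cases not0_implies_Suc of_nat_0)
  then show ?thesis by simp
qed

section \<open>Joint eigenvectors\<close>

context vector_space
begin

lemma joint_eigenvectors_sum_eq_0:
  fixes f :: "'j \<Rightarrow> 'b \<Rightarrow> 'b" and ev :: "'w \<Rightarrow> 'j \<Rightarrow> 'a"
  assumes "finite L"
    and lin: "\<And>j. j \<in> J \<Longrightarrow> Vector_Spaces.linear scale scale (f j)"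
    and eig: "\<And>w j. w \<in> L \<Longrightarrow> j \<in> J \<Longrightarrow> f j (p w) = ev w j *s p w"
    and sep: "\<And>w w'. w \<in> L \<Longrightarrow> w' \<in> L \<Longrightarrow> w \<noteq> w' \<Longrightarrow> \<exists>j\<in>J. ev w j \<noteq> ev w' j"
    and "sum p L = 0"
  shows "\<forall>w\<in>L. p w = 0"
  using assms(1,3-)
proof (induction L arbitrary: p rule: finite_induct)
  case (insert w0 L)
  have "p w = 0" if "w \<in> L" for w
  proof -
    obtain j where j: "j \<in> J" "ev w j \<noteq> ev w0 j"
      using insert.prems(2) \<open>w \<in> L\<close> insert.hyps(2) by (metis insertCI)
    interpret f: Vector_Spaces.linear scale scale "f j" by (fact lin[OF j(1)])
    define q where "q w' = (ev w' j - ev w0 j) *s p w'" for w'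
    have "f j (sum p (insert w0 L)) - ev w0 j *s sum p (insert w0 L) = sum q (insert w0 L)"
      using insert.prems(1) j(1)
      by (simp add: f.sum q_def scale_sum_right scale_left_diff_distrib sum_subtractf)
    then have "sum q L = 0"
      using insert.prems(3) insert.hyps by (simp add: q_def)
    moreover have "f j' (q w') = ev w' j' *s q w'" if "w' \<in> L" "j' \<in> J" for w' j'
    proof -
      interpret f': Vector_Spaces.linear scale scale "f j'" by (fact lin[OF that(2)])
      show ?thesis using insert.prems(1) that by (simp add: q_def f'.scale scale_left_commute)
    qed
    ultimately have "\<forall>w'\<in>L. q w' = 0"
      using insert.IH insert.prems(2) by blast
    then have "q w = 0" using \<open>w \<in> L\<close> by blast
    with j(2) show "p w = 0" by (simp add: q_def)
  qed
  with insert.prems(3) insert.hyps show ?case by simp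
qed simp

lemma eigenvector_decomposition:
  assumes "Vector_Spaces.linear scale scale f" and "v \<in> span {v. \<exists>c. f v = c *s v}"
  obtains D p where "finite D" "v = sum p D" "\<And>d. d \<in> D \<Longrightarrow> f (p d) = d *s p d"
proof -
  obtain t r where t: "finite t" "t \<subseteq> {v. \<exists>c. f v = c *s v}" "v = (\<Sum>x\<in>t. r x *s x)"
    using assms(2) unfolding span_explicit by blast
  define ev where "ev x = (SOME c. f x = c *s x)" for x
  have ev: "f x = ev x *s x" if "x \<in> t" for x
    using t(2) that unfolding ev_def by (auto intro: someI_ex)
  define p where "p d = (\<Sum>x\<in>{x\<in>t. ev x = d}. r x *s x)" for d
  interpret f: Vector_Spaces.linear scale scale f by (fact assms(1))
  have "v = sum p (ev ` t)"
    unfolding p_def t(3) by (rule sum.image_gen[OF t(1)])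
  moreover have "f (p d) = d *s p d" for d
    using ev by (simp add: p_def f.sum f.scale scale_sum_right mult.commute)
  ultimately show thesis using that t(1) by blast
qed

lemma eigencomponent_of_commuting:
  assumes lin: "Vector_Spaces.linear scale scale f" "Vector_Spaces.linear scale scale g"
    and comm: "\<And>x. f (g x) = g (f x)"
    and "g v = c *s v" and "finite D" "v = sum p D" and eig: "\<And>d. d \<in> D \<Longrightarrow> f (p d) = d *s p d"
    and "d \<in> D"
  shows "g (p d) = c *s p d"
proof -
  interpret f: Vector_Spaces.linear scale scale f by (fact lin(1))
  interpret g: Vector_Spaces.linear scale scale g by (fact lin(2))
  define q where "q d = g (p d) - c *s p d" for d
  have "sum q D = g v - c *s v"
    using assms(6) by (simp add: q_def g.sum scale_sum_right sum_subtractf)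
  then have "sum q D = 0" using assms(4) by simp
  moreover have "f (q d') = d' *s q d'" if "d' \<in> D" for d'
  proof -
    have "f (q d') = g (f (p d')) - c *s f (p d')" by (simp add: q_def f.diff f.scale comm)
    also have "\<dots> = d' *s q d'"
      using eig[OF that] by (simp add: q_def g.scale scale_right_diff_distrib scale_left_commute)
    finally show ?thesis .
  qed
  ultimately have "\<forall>d'\<in>D. q d' = 0"
    using assms(5) lin(1) by (intro joint_eigenvectors_sum_eq_0[of D "{()}" "\<lambda>_. f" q "\<lambda>d _. d"]) auto
  with \<open>d \<in> D\<close> show ?thesis by (simp add: q_def)
qed

lemma common_eigenvector_exists:
  assumes "finite J" and lin: "\<And>j. j \<in> J \<Longrightarrow> Vector_Spaces.linear scale scale (f j)"
    and comm: "\<And>i j x. i \<in> J \<Longrightarrow> j \<in> J \<Longrightarrow> f i (f j x) = f j (f i x)"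
    and diag: "\<And>j. j \<in> J \<Longrightarrow> span {v. \<exists>c. f j v = c *s v} = UNIV"
    and "(u :: 'b) \<noteq> 0"
  obtains v ev where "v \<noteq> 0" "\<And>j. j \<in> J \<Longrightarrow> f j v = ev j *s v"
proof -
  have "\<exists>v ev. v \<noteq> 0 \<and> (\<forall>j\<in>J'. f j v = ev j *s v)" if "finite J'" "J' \<subseteq> J" for J'
    using that
  proof (induction J' rule: finite_induct)
    case empty
    show ?case using \<open>u \<noteq> 0\<close> by (intro exI[of _ u]) simp
  next
    case (insert j0 J')
    have j0: "j0 \<in> J" and "J' \<subseteq> J" using insert.prems by simp_all
    then obtain v ev where v: "v \<noteq> 0" "\<forall>j\<in>J'. f j v = ev j *s v"
      using insert.IH by blast
    have v_span: "v \<in> span {v. \<exists>c. f j0 v = c *s v}" using diag[OF j0] by simp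
    obtain D p where D: "finite D" "v = sum p D" "\<And>d. d \<in> D \<Longrightarrow> f j0 (p d) = d *s p d"
      using eigenvector_decomposition[OF lin[OF j0] v_span] by blast
    obtain d where d: "d \<in> D" "p d \<noteq> 0"
      using D(2) v(1) sum.neutral[of D p] by blast
    have eig: "f j (p d) = ev j *s p d" if "j \<in> J'" for j
    proof -
      have j: "j \<in> J" using that insert.prems by auto
      show ?thesis
        using eigencomponent_of_commuting[OF lin[OF j0] lin[OF j] comm[OF j0 j] _ D d(1)] v(2) that
        by blast
    qed
    have "\<forall>j\<in>insert j0 J'. f j (p d) = (ev(j0 := d)) j *s p d"
      using D(3)[OF d(1)] eig insert.hyps(2) by auto
    with d(2) show ?case by blast
  qed
  from this[OF assms(1) order_refl] obtain v ev where "v \<noteq> 0" "\<forall>j\<in>J. f j v = ev j *s v"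
    by blast
  then show thesis using that by blast
qed

end

definition lincomb :: "('a::zero \<Rightarrow> 'b \<Rightarrow> 'b) \<Rightarrow> ('x \<Rightarrow> 'b) \<Rightarrow> ('x \<Rightarrow> 'a) \<Rightarrow> 'b::comm_monoid_add" where
  "lincomb s g r = (\<Sum>x | r x \<noteq> 0. s (r x) (g x))"

definition cons_comb :: "'x \<Rightarrow> ('x list \<Rightarrow> 'a::zero) \<Rightarrow> 'x list \<Rightarrow> 'a" where
  "cons_comb p r = (\<lambda>Y. case Y of [] \<Rightarrow> 0 | q # X \<Rightarrow> if q = p then r X else 0)"

lemma cons_comb_support: "{Y. cons_comb p r Y \<noteq> 0} = Cons p ` {X. r X \<noteq> 0}"
proof (rule set_eqI)
  fix Y show "Y \<in> {Y. cons_comb p r Y \<noteq> 0} \<longleftrightarrow> Y \<in> Cons p ` {X. r X \<noteq> 0}"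
    by (cases Y) (auto simp: cons_comb_def)
qed

lemma lincomb_cons_comb: "lincomb s g (cons_comb p r) = lincomb s (\<lambda>X. g (p # X)) r"
  unfolding lincomb_def cons_comb_support by (subst sum.reindex) (auto simp: cons_comb_def)

lemma module_mult: "module ((*) :: 'a::comm_ring_1 \<Rightarrow> 'a \<Rightarrow> 'a)"
  by unfold_locales (simp_all add: algebra_simps)

context module
begin

lemma lincomb_superset:
  "finite C \<Longrightarrow> {x. r x \<noteq> 0} \<subseteq> C \<Longrightarrow> lincomb scale g r = (\<Sum>x\<in>C. scale (r x) (g x))"
  unfolding lincomb_def by (rule sum.mono_neutral_left) auto

lemma lincomb_add:
  assumes "finite {x. r x \<noteq> 0}" "finite {x. r' x \<noteq> 0}"
  shows "lincomb scale g (\<lambda>x. r x + r' x) = lincomb scale g r + lincomb scale g r'"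
proof -
  let ?C = "{x. r x \<noteq> 0} \<union> {x. r' x \<noteq> 0}"
  have "finite ?C" using assms by simp
  then show ?thesis
    by (subst (1 2 3) lincomb_superset[of ?C]) (auto simp: scale_left_distrib sum.distrib)
qed

lemma lincomb_diff:
  assumes "finite {x. r x \<noteq> 0}" "finite {x. r' x \<noteq> 0}"
  shows "lincomb scale g (\<lambda>x. r x - r' x) = lincomb scale g r - lincomb scale g r'"
proof -
  let ?C = "{x. r x \<noteq> 0} \<union> {x. r' x \<noteq> 0}"
  have "finite ?C" using assms by simp
  then show ?thesis
    by (subst (1 2 3) lincomb_superset[of ?C]) (auto simp: scale_left_diff_distrib sum_subtractf)
qed

lemma lincomb_scale:
  "finite {x. r x \<noteq> 0} \<Longrightarrow> lincomb scale g (\<lambda>x. c * r x) = scale c (lincomb scale g r)"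
  by (subst (1 2) lincomb_superset[of "{x. r x \<noteq> 0}"]) (auto simp: scale_sum_right)

lemma lincomb_indicator: "lincomb scale g (\<lambda>x. if x = y then 1 else 0) = g y"
  by (subst lincomb_superset[of "{y}"]) auto

end

section \<open>Words in the matrix units\<close>

abbreviation letters :: "nat \<Rightarrow> (nat \<times> nat) set" where
  "letters n \<equiv> {1..n} \<times> {1..n}"

fun word_act :: "(nat \<Rightarrow> nat \<Rightarrow> 'a \<Rightarrow> 'a) \<Rightarrow> (nat \<times> nat) list \<Rightarrow> 'a \<Rightarrow> 'a" where
  "word_act E [] v = v"
| "word_act E ((a, b) # X) v = E a b (word_act E X v)"

fun word_wt :: "(nat \<times> nat) list \<Rightarrow> nat \<Rightarrow> complex" where
  "word_wt [] = 0"
| "word_wt ((a, b) # X) = shift (word_wt X) a b"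

text \<open>In \<open>N(\<lambda>)\<close> the word \<open>X\<close> sends \<open>y(\<mu>)\<close> to \<open>word_coeff X \<mu> \<cdot> y(\<mu> + word_wt X)\<close>.\<close>

fun word_coeff :: "(nat \<times> nat) list \<Rightarrow> (nat \<Rightarrow> complex) \<Rightarrow> complex" where
  "word_coeff [] mu = 1"
| "word_coeff ((a, b) # X) mu = (mu + word_wt X) b * word_coeff X mu"

lemma word_act_append: "word_act E (X @ Y) v = word_act E X (word_act E Y v)"
  by (induction E X v rule: word_act.induct) auto

lemma word_wt_append: "word_wt (X @ Y) = word_wt X + word_wt Y"
  by (induction X rule: word_wt.induct) (auto simp: shift_def)

lemma word_coeff_append:
  "word_coeff (X @ Y) mu = word_coeff X (mu + word_wt Y) * word_coeff Y mu"
  by (induction X mu rule: word_coeff.induct) (auto simp: word_wt_append ac_simps)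

lemma word_wt_outside: "X \<in> lists (letters n) \<Longrightarrow> k \<notin> {1..n} \<Longrightarrow> word_wt X k = 0"
  by (induction X rule: word_wt.induct) (auto simp: shift_def)

lemma word_wt_in_Nats:
  assumes "\<forall>(a, b) \<in> set X. b = l \<longrightarrow> a = l"
  shows "word_wt X l \<in> \<nat>"
  using assms
proof (induction X rule: word_wt.induct)
  case (2 a b X)
  then have "word_wt X l \<in> \<nat>" by auto
  with 2 show ?case by (auto simp: shift_def)
qed simp

lemma word_wt_eq_neg_one_split:
  assumes "word_wt X l = -1"
  obtains B a M where "X = B @ (a, l) # M" and "a \<noteq> l"
proof -
  have "word_wt X l \<notin> \<nat>"
    using assms of_int_in_Nats_iff[of "-1", where 'a = complex] by simp
  then obtain p where "p \<in> set X" "snd p = l" "fst p \<noteq> l"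
    using word_wt_in_Nats by fastforce
  then show thesis using that split_list[of p X] by (metis prod.collapse)
qed

lemma word_wt_contract: "word_wt ((a, l) # (l, j) # R) = word_wt ((a, j) # R)"
  by (auto simp: shift_def)

lemma word_wt_swap:
  shows "word_wt ((c, d) # (a, l) # R) = word_wt ((a, l) # (c, d) # R)"
    and "l = c \<Longrightarrow> word_wt ((a, d) # R) = word_wt ((a, l) # (c, d) # R)"
    and "d = a \<Longrightarrow> word_wt ((c, l) # R) = word_wt ((a, l) # (c, d) # R)"
  by (auto simp: shift_def)

lemma word_coeff_diag: "word_coeff (A @ [(j, j)]) mu = mu j * word_coeff A mu"
proof -
  have "word_wt [(j, j)] = 0" by (simp add: shift_def fun_eq_iff)
  then show ?thesis by (simp add: word_coeff_append)
qed

lemma word_coeff_contract: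
  assumes "l \<noteq> j"
  shows "word_coeff (B @ [(a, l), (l, j)]) mu = (1 + mu l) * word_coeff (B @ [(a, j)]) mu"
  using word_coeff_append[of B "[(a, l), (l, j)]"] word_coeff_append[of B "[(a, j)]"] assms
  by (simp only: word_wt_contract) (simp add: shift_def algebra_simps)

lemma word_coeff_swap:
  "word_coeff (B @ (a, l) # (c, d) # R) mu =
     word_coeff (B @ (c, d) # (a, l) # R) mu
     + (if l = c then word_coeff (B @ (a, d) # R) mu else 0)
     - (if d = a then word_coeff (B @ (c, l) # R) mu else 0)"
proof -
  define nu where "nu = mu + word_wt R"
  define Y where "Y = (a, l) # (c, d) # R"
  define P where "P = word_coeff B (mu + word_wt Y)"
  have prefix: "word_coeff (B @ Y') mu = P * word_coeff Y' mu" if "word_wt Y' = word_wt Y" for Y'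
    using that by (simp add: word_coeff_append P_def)
  have "word_coeff (B @ (a, l) # (c, d) # R) mu =
      P * ((nu l + (if l = c then 1 else 0) - (if l = d then 1 else 0)) * nu d * word_coeff R mu)"
    using prefix[of Y] by (simp add: Y_def nu_def shift_def)
  moreover have "word_coeff (B @ (c, d) # (a, l) # R) mu =
      P * ((nu d + (if d = a then 1 else 0) - (if d = l then 1 else 0)) * nu l * word_coeff R mu)"
    by (subst prefix) (auto simp: Y_def word_wt_swap nu_def shift_def)
  moreover have "l = c \<Longrightarrow> word_coeff (B @ (a, d) # R) mu = P * (nu d * word_coeff R mu)"
    by (subst prefix) (auto simp: Y_def nu_def shift_def)
  moreover have "d = a \<Longrightarrow> word_coeff (B @ (c, l) # R) mu = P * (nu l * word_coeff R mu)"
    by (subst prefix) (auto simp: Y_def nu_def shift_def)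
  ultimately show ?thesis
    by (cases "l = c"; cases "d = a"; cases "l = d") (simp_all add: ring_distribs)
qed

locale gl_module = vector_space sc
  for sc :: "complex \<Rightarrow> 'v::ab_group_add \<Rightarrow> 'v" +
  fixes n :: nat and E :: "nat \<Rightarrow> nat \<Rightarrow> 'v \<Rightarrow> 'v"
  assumes E_linear: "l \<in> {1..n} \<Longrightarrow> j \<in> {1..n} \<Longrightarrow> Vector_Spaces.linear sc sc (E l j)"
    and E_commutator: "\<lbrakk>i \<in> {1..n}; j \<in> {1..n}; k \<in> {1..n}; m \<in> {1..n}\<rbrakk> \<Longrightarrow>
      E i j (E k m v) - E k m (E i j v) = (if j = k then E i m v else 0) - (if m = i then E k j v else 0)"
begin

lemma word_act_linear: "X \<in> lists (letters n) \<Longrightarrow> Vector_Spaces.linear sc sc (word_act E X)"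
proof (induction X)
  case Nil
  have "word_act E [] = (\<lambda>v. v)" by auto
  then show ?case using linear_ident by simp
next
  case (Cons p X)
  obtain a b where p: "p = (a, b)" by fastforce
  have "X \<in> lists (letters n)" "a \<in> {1..n}" "b \<in> {1..n}" using Cons.prems p by auto
  moreover have "word_act E (p # X) = E a b \<circ> word_act E X" by (auto simp: p)
  ultimately show ?case
    using Vector_Spaces.linear_compose[OF Cons.IH E_linear] by metis
qed

definition weight_space :: "(nat \<Rightarrow> complex) \<Rightarrow> 'v set" where
  "weight_space mu = {v. \<forall>j\<in>{1..n}. E j j v = sc (mu j) v}"

lemma subspace_weight_space: "subspace (weight_space mu)"
proof -
  have "E j j (x + y) = E j j x + E j j y" "E j j (sc c x) = sc c (E j j x)" "E j j 0 = 0"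
    if "j \<in> {1..n}" for j x y c
  proof -
    interpret Ejj: Vector_Spaces.linear sc sc "E j j" by (rule E_linear[OF that that])
    show "E j j (x + y) = E j j x + E j j y" "E j j (sc c x) = sc c (E j j x)" "E j j 0 = 0"
      by (simp_all add: Ejj.add Ejj.scale Ejj.zero)
  qed
  then show ?thesis
    by (auto simp: subspace_def weight_space_def scale_right_distrib scale_left_commute)
qed

lemma E_in_weight_space:
  assumes "v \<in> weight_space mu" "a \<in> {1..n}" "b \<in> {1..n}"
  shows "E a b v \<in> weight_space (shift mu a b)"
  unfolding weight_space_def
proof (intro CollectI ballI)
  fix j assume j: "j \<in> {1..n}"
  interpret Eab: Vector_Spaces.linear sc sc "E a b" by (rule E_linear[OF assms(2,3)])
  have "E j j (E a b v) = E a b (E j j v) + (if j = a then E a b v else 0) - (if b = j then E a b v else 0)"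
    using E_commutator[OF j j assms(2,3), of v] by (cases "j = a"; cases "b = j") (simp_all add: algebra_simps)
  also have "\<dots> = sc (shift mu a b j) (E a b v)"
    using assms(1) j by (auto simp: weight_space_def Eab.scale shift_def algebra_simps)
  finally show "E j j (E a b v) = sc (shift mu a b j) (E a b v)" .
qed

lemma word_act_in_weight_space:
  "v \<in> weight_space mu \<Longrightarrow> X \<in> lists (letters n) \<Longrightarrow> word_act E X v \<in> weight_space (mu + word_wt X)"
proof (induction X)
  case (Cons p X)
  obtain a b where p: "p = (a, b)" by fastforce
  have X: "X \<in> lists (letters n)" and ab: "a \<in> {1..n}" "b \<in> {1..n}"
    using Cons.prems p by auto
  have "E a b (word_act E X v) \<in> weight_space (shift (mu + word_wt X) a b)"
    by (rule E_in_weight_space[OF Cons.IH[OF Cons.prems(1) X] ab])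
  moreover have "shift (mu + word_wt X) a b = mu + word_wt (p # X)"
    by (simp add: p shift_def fun_eq_iff)
  ultimately show ?case by (metis p word_act.simps(2))
qed simp

lemma weight_vector_exists:
  assumes "\<forall>j\<in>{1..n}. span {v. \<exists>c. E j j v = sc c v} = UNIV" and "(u :: 'v) \<noteq> 0"
  obtains v mu where "v \<noteq> 0" "v \<in> weight_space mu"
proof -
  have "E i i (E j j x) = E j j (E i i x)" if "i \<in> {1..n}" "j \<in> {1..n}" for i j x
    using E_commutator[OF that(1,1) that(2,2), of x] by (cases "i = j") auto
  then obtain v mu where "v \<noteq> 0" "\<And>j. j \<in> {1..n} \<Longrightarrow> E j j v = sc (mu j) v"
    using common_eigenvector_exists[of "{1..n}" "\<lambda>j. E j j"] assms E_linear by blast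
  then have "v \<in> weight_space mu" by (simp add: weight_space_def)
  with \<open>v \<noteq> 0\<close> show thesis by (rule that)
qed

lemma word_act_swap:
  assumes "B \<in> lists (letters n)" "(a, l) \<in> letters n" "(c, d) \<in> letters n"
  shows "word_act E (B @ (a, l) # (c, d) # R) v =
     word_act E (B @ (c, d) # (a, l) # R) v
     + (if l = c then word_act E (B @ (a, d) # R) v else 0)
     - (if d = a then word_act E (B @ (c, l) # R) v else 0)"
proof -
  interpret B: Vector_Spaces.linear sc sc "word_act E B" by (rule word_act_linear[OF assms(1)])
  define u where "u = word_act E R v"
  have "E a l (E c d u) = E c d (E a l u) + (if l = c then E a d u else 0) - (if d = a then E c l u else 0)"
    using E_commutator[of a l c d u] assms(2,3) by (simp add: algebra_simps)
  then show ?thesis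
    by (simp add: word_act_append u_def B.add B.diff B.zero)
qed

end

section \<open>Words of weight zero act by scalars\<close>

text \<open>The defining relation holds for \<open>E\<^sub>l\<^sub>j = x\<^sub>l \<partial>\<^sub>j\<close> in the Weyl algebra, and hence on \<open>N(\<lambda>)\<close>.\<close>

locale oscillator_module = gl_module +
  assumes E_relation: "\<lbrakk>l \<in> {1..n}; j \<in> {1..n}; l \<noteq> j\<rbrakk> \<Longrightarrow>
    E l l v - E l j (E j l v) + E j j (E l l v) = 0"
begin

lemma E_E_opposite:
  assumes "v \<in> weight_space mu" "l \<in> {1..n}" "j \<in> {1..n}" "l \<noteq> j"
  shows "E j l (E l j v) = sc (mu j * (1 + mu l)) v"
proof -
  interpret Ell: Vector_Spaces.linear sc sc "E l l" by (rule E_linear[OF assms(2,2)])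
  have "E j l (E l j v) = E j j v + E l l (E j j v)"
    using E_relation[of j l v] assms(2-4) by (simp add: algebra_simps)
  then show ?thesis
    using assms(1-3) by (simp add: weight_space_def Ell.scale algebra_simps)
qed

lemma E_E_chain:
  assumes v: "v \<in> weight_space mu" and range: "a \<in> {1..n}" "l \<in> {1..n}" "j \<in> {1..n}"
    and "a \<noteq> l" "l \<noteq> j"
  shows "E a l (E l j v) = sc (1 + mu l) (E a j v)"
proof (cases "a = j")
  case True
  then show ?thesis
    using E_E_opposite[OF v range(2,3) \<open>l \<noteq> j\<close>] v range by (simp add: weight_space_def)
next
  case False
  interpret Eaj: Vector_Spaces.linear sc sc "E a j" by (rule E_linear[OF range(1,3)])
  \<comment> \<open>\<open>E\<^sub>a\<^sub>l = [E\<^sub>a\<^sub>j, E\<^sub>j\<^sub>l]\<close>, and \<open>E\<^sub>j\<^sub>l E\<^sub>l\<^sub>j\<close> acts by a scalar on each weight space\<close>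
  have "E a l (E l j v) = E a j (E j l (E l j v)) - E j l (E a j (E l j v))"
    using E_commutator[of a j j l "E l j v"] range \<open>a \<noteq> l\<close> by simp
  also have "E a j (E l j v) = E l j (E a j v)"
    using E_commutator[of a j l j v] range \<open>a \<noteq> j\<close> \<open>l \<noteq> j\<close> by simp
  also have "E j l (E l j (E a j v)) = sc ((mu j - 1) * (1 + mu l)) (E a j v)"
    using E_E_opposite[OF E_in_weight_space[OF v range(1,3)] range(2,3) \<open>l \<noteq> j\<close>]
      False \<open>a \<noteq> l\<close> \<open>l \<noteq> j\<close> by (simp add: shift_def)
  also have "E a j (E j l (E l j v)) = sc (mu j * (1 + mu l)) (E a j v)"
    using E_E_opposite[OF v range(2,3) \<open>l \<noteq> j\<close>] by (simp add: Eaj.scale)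
  also have "sc (mu j * (1 + mu l)) (E a j v) - sc ((mu j - 1) * (1 + mu l)) (E a j v) =
      sc (mu j * (1 + mu l) - (mu j - 1) * (1 + mu l)) (E a j v)"
    by (rule scale_left_diff_distrib[symmetric])
  finally show ?thesis by (simp add: algebra_simps)
qed

lemma word_act_contract:
  assumes "v \<in> weight_space mu" "B \<in> lists (letters n)" "a \<in> {1..n}" "l \<in> {1..n}" "j \<in> {1..n}"
    and "a \<noteq> l" "l \<noteq> j"
  shows "word_act E (B @ [(a, l), (l, j)]) v = sc (1 + mu l) (word_act E (B @ [(a, j)]) v)"
proof -
  interpret B: Vector_Spaces.linear sc sc "word_act E B" by (rule word_act_linear[OF assms(2)])
  show ?thesis using E_E_chain[OF assms(1,3-)] by (simp add: word_act_append B.scale)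
qed

text \<open>The letter \<open>E\<^sub>a\<^sub>l\<close> is moved past \<open>M\<close> towards \<open>E\<^sub>l\<^sub>j\<close>; every commutation creates only
  words shorter than \<open>k\<close>.\<close>

lemma word_act_zero_weight_step:
  assumes v: "v \<in> weight_space mu"
    and shorter: "\<And>W. length W < k \<Longrightarrow> W \<in> lists (letters n) \<Longrightarrow> word_wt W = 0 \<Longrightarrow>
      word_act E W v = sc (word_coeff W mu) v"
    and "a \<noteq> l" "l \<noteq> j"
  shows "length (B @ (a, l) # M @ [(l, j)]) = k \<Longrightarrow> B @ (a, l) # M @ [(l, j)] \<in> lists (letters n) \<Longrightarrow>
    word_wt (B @ (a, l) # M @ [(l, j)]) = 0 \<Longrightarrow>
    word_act E (B @ (a, l) # M @ [(l, j)]) v = sc (word_coeff (B @ (a, l) # M @ [(l, j)]) mu) v"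
proof (induction M arbitrary: B)
  case Nil
  have letters: "B \<in> lists (letters n)" "a \<in> {1..n}" "l \<in> {1..n}" "j \<in> {1..n}"
    using Nil.prems(2) by auto
  have "word_wt (B @ [(a, j)]) = word_wt (B @ (a, l) # [] @ [(l, j)])"
    by (simp only: append_Nil word_wt_append word_wt_contract)
  also have "\<dots> = 0" by (rule Nil.prems(3))
  finally have "word_wt (B @ [(a, j)]) = 0" .
  then have "word_act E (B @ [(a, j)]) v = sc (word_coeff (B @ [(a, j)]) mu) v"
    using Nil.prems(1,2) by (intro shorter) auto
  then show ?case
    using word_act_contract[OF v letters \<open>a \<noteq> l\<close> \<open>l \<noteq> j\<close>] word_coeff_contract[OF \<open>l \<noteq> j\<close>]
    by simp
next
  case (Cons m M)
  obtain c d where m: "m = (c, d)" by fastforce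
  define R where "R = M @ [(l, j)]"
  have W: "B @ (a, l) # (m # M) @ [(l, j)] = B @ (a, l) # (c, d) # R" by (simp add: m R_def)
  have lists: "B \<in> lists (letters n)" "(a, l) \<in> letters n" "(c, d) \<in> letters n" "R \<in> lists (letters n)"
    using Cons.prems(2) by (auto simp: m R_def)
  have wt: "word_wt (B @ (a, l) # (c, d) # R) = 0" using Cons.prems(3) unfolding W .
  have "word_act E ((B @ [(c, d)]) @ (a, l) # M @ [(l, j)]) v =
      sc (word_coeff ((B @ [(c, d)]) @ (a, l) # M @ [(l, j)]) mu) v"
    using Cons.prems lists wt word_wt_swap(1)[of c d a l R]
    by (intro Cons.IH) (auto simp: W R_def word_wt_append simp del: word_wt.simps)
  moreover have "word_act E (B @ (a, d) # R) v = sc (word_coeff (B @ (a, d) # R) mu) v" if "l = c"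
    using Cons.prems(1) lists wt word_wt_swap(2)[OF that, of a d R]
    by (intro shorter) (auto simp: W R_def word_wt_append simp del: word_wt.simps)
  moreover have "word_act E (B @ (c, l) # R) v = sc (word_coeff (B @ (c, l) # R) mu) v" if "d = a"
    using Cons.prems(1) lists wt word_wt_swap(3)[OF that, of c l R]
    by (intro shorter) (auto simp: W R_def word_wt_append simp del: word_wt.simps)
  ultimately show ?case
    unfolding W word_act_swap[OF lists(1-3)] word_coeff_swap[of B a l c d R]
    by (auto simp: R_def scale_left_distrib scale_left_diff_distrib)
qed

lemma word_act_zero_weight:
  assumes "v \<in> weight_space mu"
  shows "W \<in> lists (letters n) \<Longrightarrow> word_wt W = 0 \<Longrightarrow> word_act E W v = sc (word_coeff W mu) v"
proof (induction "length W" arbitrary: W rule: less_induct)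
  case less
  show ?case
  proof (cases W rule: rev_exhaust)
    case (snoc A p)
    obtain l j where p: "p = (l, j)" by fastforce
    have A: "A \<in> lists (letters n)" and range: "l \<in> {1..n}" "j \<in> {1..n}"
      using less.prems(1) snoc p by auto
    have wt: "word_wt A + word_wt [(l, j)] = 0"
      using less.prems(2) snoc p by (simp add: word_wt_append)
    show ?thesis
    proof (cases "l = j")
      case True
      interpret A: Vector_Spaces.linear sc sc "word_act E A" by (rule word_act_linear[OF A])
      have "word_wt A = 0" using wt True by (simp add: shift_def fun_eq_iff)
      then have "word_act E A v = sc (word_coeff A mu) v"
        using less.hyps[of A] A snoc by simp
      then show ?thesis
        using assms range True snoc p
        by (simp add: word_act_append word_coeff_diag weight_space_def A.scale)
    next
      case False
      have "word_wt A l = -1"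
        using fun_cong[OF wt, of l] False by (simp add: shift_def eq_neg_iff_add_eq_0)
      then obtain B a M where "A = B @ (a, l) # M" "a \<noteq> l"
        by (rule word_wt_eq_neg_one_split)
      then show ?thesis
        using word_act_zero_weight_step[OF assms less.hyps _ False] less.prems snoc p by auto
    qed
  qed simp
qed

end

section \<open>The index set \<open>S(\<lambda>)\<close>\<close>

lemma Xset_eq: "Xset a = (if a \<in> \<nat> then \<nat> else if a \<in> \<int> then \<int> - \<nat> else {x. x - a \<in> \<int>})"
proof -
  have "x \<in> {- of_nat (Suc k) | k. True} \<longleftrightarrow> x \<in> \<int> - \<nat>" for x :: complex
  proof
    assume "x \<in> {- of_nat (Suc k) | k. True}"
    then obtain k where x: "x = of_int (- int (Suc k))" by auto
    have "(of_int (- int (Suc k)) :: complex) \<notin> \<nat>" by (simp only: of_int_in_Nats_iff)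
    with x show "x \<in> \<int> - \<nat>" by (metis DiffI Ints_of_int)
  next
    assume "x \<in> \<int> - \<nat>"
    then obtain k where "x = of_int k" "k < 0" by (auto elim!: Ints_cases simp: of_int_in_Nats_iff)
    then show "x \<in> {- of_nat (Suc k) | k. True}" by (auto dest!: negD)
  qed
  then show ?thesis
    by (auto simp: Xset_def Nats_def Ints_def algebra_simps)
qed

text \<open>The coordinates reachable from \<open>X\<^sub>j\<close> by words with nonzero coefficient: lowering a
  coordinate in \<open>\<int>\<^sub>\<ge>\<^sub>0\<close> below \<open>0\<close> costs a factor \<open>0\<close>, the other coordinates range over \<open>a + \<int>\<close>.\<close>

definition Xhull :: "complex \<Rightarrow> complex set" where
  "Xhull a = (if a \<in> \<nat> then \<nat> else {x. x - a \<in> \<int>})"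

lemma Xset_self: "a \<in> Xset a"
  by (simp add: Xset_eq)

lemma Xset_subset_Xhull: "Xset a \<subseteq> Xhull a"
  by (auto simp: Xset_eq Xhull_def)

lemma Xhull_diff_Ints: "x \<in> Xhull a \<Longrightarrow> x - a \<in> \<int>"
  using Nats_subset_Ints by (auto simp: Xhull_def intro!: Ints_diff split: if_splits)

lemma Xhull_plus_one: "x \<in> Xhull a \<Longrightarrow> x + 1 \<in> Xhull a"
  by (auto simp: Xhull_def diff_add_eq[symmetric])

lemma Xhull_minus_one:
  assumes "x \<in> Xhull a" "x \<noteq> 0"
  shows "x - 1 \<in> Xhull a"
proof -
  have "x - a \<in> \<int> \<Longrightarrow> x - 1 - a \<in> \<int>" by (metis Ints_1 Ints_diff diff_right_commute)
  then show ?thesis using assms by (auto simp: Xhull_def Nats_minus_one)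
qed

lemma Xset_if_plus_one: "x \<in> Xhull a \<Longrightarrow> x + 1 \<in> Xset a \<Longrightarrow> x \<in> Xset a"
  by (auto simp: Xhull_def Xset_eq split: if_splits)

lemma Xset_if_minus_one: "x \<in> Xhull a \<Longrightarrow> x \<noteq> 0 \<Longrightarrow> x - 1 \<in> Xset a \<Longrightarrow> x \<in> Xset a"
  by (auto simp: Xhull_def Xset_eq Nats_minus_one split: if_splits)

lemma Xset_plus_one:
  assumes "x \<in> Xset a" "x + of_int m \<in> Xset a" "0 < m"
  shows "x + 1 \<in> Xset a"
proof (cases "a \<in> \<int> - \<nat>")
  case True
  then obtain k where k: "x = of_int k" using assms(1) by (auto simp: Xset_eq elim: Ints_cases)
  then show ?thesis
    using assms True of_int_in_Nats_iff[of "k + m"] of_int_in_Nats_iff[of "k + 1"]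
    by (auto simp: Xset_eq of_int_in_Nats_iff)
qed (use assms in \<open>auto simp: Xset_eq diff_add_eq[symmetric]\<close>)

lemma Xset_minus_one:
  assumes "x \<in> Xset a" "x + of_int m \<in> Xset a" "m < 0"
  shows "x - 1 \<in> Xset a" and "x \<noteq> 0"
proof -
  show "x \<noteq> 0"
    using assms Nats_subset_Ints by (auto simp: Xset_eq of_int_in_Nats_iff split: if_splits)
  moreover have "x - a \<in> \<int> \<Longrightarrow> x - 1 - a \<in> \<int>" by (metis Ints_1 Ints_diff diff_right_commute)
  moreover have "x - 1 \<in> \<nat> \<Longrightarrow> x \<in> \<nat>" by (metis Nats_1 Nats_add diff_add_cancel)
  ultimately show "x - 1 \<in> Xset a"
    using assms(1) by (auto simp: Xset_eq Nats_minus_one split: if_splits)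
qed

definition Shull :: "nat \<Rightarrow> (nat \<Rightarrow> complex) \<Rightarrow> (nat \<Rightarrow> complex) set" where
  "Shull n lam = {rho. (\<forall>k\<in>{1..n}. rho k \<in> Xhull (lam k)) \<and> (\<forall>k. k \<notin> {1..n} \<longrightarrow> rho k = 0)}"

lemma Sset_subset_Shull: "Sset n lam \<subseteq> Shull n lam"
  using Xset_subset_Xhull by (fastforce simp: Sset_def Shull_def)

lemma shift_apply:
  "shift rho a b k = (if k = a \<and> k \<noteq> b then rho k + 1 else if k = b \<and> k \<noteq> a then rho k - 1 else rho k)"
  by (auto simp: shift_def)

lemma shift_in_Shull:
  assumes "rho \<in> Shull n lam" "rho b \<noteq> 0" "a \<in> {1..n}" "b \<in> {1..n}"
  shows "shift rho a b \<in> Shull n lam"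
  using assms by (auto simp: Shull_def shift_apply intro: Xhull_plus_one Xhull_minus_one)

lemma Sset_if_shift_in_Sset:
  assumes "rho \<in> Shull n lam" "shift rho a b \<in> Sset n lam" "rho b \<noteq> 0" "a \<in> {1..n}" "b \<in> {1..n}"
  shows "rho \<in> Sset n lam"
  unfolding Sset_def
proof (intro CollectI conjI ballI allI impI)
  fix k assume k: "k \<in> {1..n}"
  have "rho k \<in> Xhull (lam k)" "shift rho a b k \<in> Xset (lam k)"
    using assms(1,2) k by (auto simp: Shull_def Sset_def)
  then show "rho k \<in> Xset (lam k)"
    using assms(3) by (auto simp: shift_apply split: if_splits
        intro: Xset_if_plus_one Xset_if_minus_one)
qed (use assms(1) in \<open>auto simp: Shull_def\<close>)

lemma shift_in_Sset:
  assumes "rho \<in> Sset n lam" "mu \<in> Sset n lam" "a \<in> {1..n}" "b \<in> {1..n}"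
    and "mu a = rho a + of_int p" "0 < p" "mu b = rho b + of_int q" "q < 0"
  shows "shift rho a b \<in> Sset n lam" and "rho b \<noteq> 0"
proof -
  have X: "rho a \<in> Xset (lam a)" "mu a \<in> Xset (lam a)" "rho b \<in> Xset (lam b)" "mu b \<in> Xset (lam b)"
    using assms(1-4) by (auto simp: Sset_def)
  have "a \<noteq> b" using assms(5-8) by auto
  have "rho a + 1 \<in> Xset (lam a)" using Xset_plus_one X assms(5,6) by metis
  moreover have "rho b - 1 \<in> Xset (lam b)" using Xset_minus_one(1) X assms(7,8) by metis
  ultimately show "shift rho a b \<in> Sset n lam"
    using assms(1,3,4) \<open>a \<noteq> b\<close> by (auto simp: Sset_def shift_apply)
  show "rho b \<noteq> 0" using Xset_minus_one(2) X assms(7,8) by metis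
qed

lemma wsum_shift: "a \<in> {1..n} \<Longrightarrow> b \<in> {1..n} \<Longrightarrow> wsum n (shift rho a b) = wsum n rho"
  by (simp add: wsum_def shift_def sum.distrib sum_subtractf)

lemma sum_eq_0_obtain_pos_neg:
  fixes d :: "'a \<Rightarrow> 'b::linordered_ab_group_add"
  assumes "finite A" "sum d A = 0" "k \<in> A" "d k \<noteq> 0"
  obtains a b where "a \<in> A" "0 < d a" "b \<in> A" "d b < 0"
proof -
  have "\<exists>a\<in>A. 0 < d a"
    using sum_nonneg_eq_0_iff[OF assms(1), of "\<lambda>x. - d x"] assms(2-4)
    by (force simp: sum_negf not_less)
  moreover have "\<exists>b\<in>A. d b < 0"
    using sum_nonneg_eq_0_iff[OF assms(1), of d] assms(2-4) by (force simp: not_less)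
  ultimately show thesis using that by blast
qed

lemma Sset_offset:
  assumes "rho \<in> Sset n lam" "mu \<in> Sset n lam"
  obtains d :: "nat \<Rightarrow> int" where "\<forall>k\<in>{1..n}. mu k = rho k + of_int (d k)"
proof -
  have "\<forall>k\<in>{1..n}. \<exists>m::int. mu k = rho k + of_int m"
  proof
    fix k assume "k \<in> {1..n}"
    then have "mu k \<in> Xhull (lam k)" "rho k \<in> Xhull (lam k)"
      using assms(1,2) by (auto simp: Sset_def intro!: Xset_subset_Xhull[THEN subsetD])
    then have "mu k - lam k \<in> \<int>" "rho k - lam k \<in> \<int>" by (simp_all add: Xhull_diff_Ints)
    moreover have "mu k - rho k = (mu k - lam k) - (rho k - lam k)" by simp
    ultimately have "mu k - rho k \<in> \<int>" by (simp only: Ints_diff)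
    then obtain m where "mu k - rho k = of_int m" by (elim Ints_cases)
    then show "\<exists>m::int. mu k = rho k + of_int m" by (auto simp: algebra_simps)
  qed
  then show thesis using that by metis
qed

lemma Sset_connected:
  assumes "rho \<in> Sset n lam" "mu \<in> Sset n lam" "wsum n rho = wsum n mu"
  shows "\<exists>Z \<in> lists (letters n). rho + word_wt Z = mu \<and> word_coeff Z rho \<noteq> 0"
proof -
  obtain d where "\<forall>k\<in>{1..n}. mu k = rho k + of_int (d k)" using Sset_offset[OF assms(1,2)] .
  with assms show ?thesis
  proof (induction "\<Sum>k=1..n. nat \<bar>d k\<bar>" arbitrary: rho d rule: less_induct)
    case less
    show ?case
    proof (cases "\<forall>k\<in>{1..n}. d k = 0")
      case True
      have "rho k = mu k" for k
        using True less.prems(1,2,4) by (cases "k \<in> {1..n}") (auto simp: Sset_def)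
      then have "rho = mu" by blast
      then show ?thesis by (intro bexI[of _ "[]"]) auto
    next
      case False
      then obtain k where k: "k \<in> {1..n}" "d k \<noteq> 0" by blast
      have "of_int (\<Sum>k=1..n. d k) = (0 :: complex)"
        using less.prems(3,4) by (simp add: wsum_def sum.distrib)
      then have "sum d {1..n} = 0" by (simp only: of_int_eq_0_iff)
      then obtain a b where ab: "a \<in> {1..n}" "0 < d a" "b \<in> {1..n}" "d b < 0"
        using sum_eq_0_obtain_pos_neg[of "{1..n}" d k] k by blast
      define d' where "d' = d(a := d a - 1, b := d b + 1)"
      have step: "shift rho a b \<in> Sset n lam" "rho b \<noteq> 0"
        using shift_in_Sset[OF less.prems(1,2) ab(1,3) _ ab(2) _ ab(4)] less.prems(4) ab by auto
      have less: "(\<Sum>k=1..n. nat \<bar>d' k\<bar>) < (\<Sum>k=1..n. nat \<bar>d k\<bar>)"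
        using ab by (intro sum_strict_mono_ex1) (auto simp: d'_def)
      have offset: "\<forall>k\<in>{1..n}. mu k = shift rho a b k + of_int (d' k)"
        using less.prems(4) ab by (auto simp: d'_def shift_def)
      have "wsum n (shift rho a b) = wsum n mu" using wsum_shift ab(1,3) less.prems(3) by simp
      then obtain Z where Z: "Z \<in> lists (letters n)" "shift rho a b + word_wt Z = mu"
          "word_coeff Z (shift rho a b) \<noteq> 0"
        using less.hyps[OF less step(1) less.prems(2) _ offset] by blast
      have shift: "shift rho a b = rho + word_wt [(a, b)]" by (simp add: shift_def fun_eq_iff)
      have "rho + word_wt (Z @ [(a, b)]) = mu"
        using Z(2) unfolding shift word_wt_append by (simp add: ac_simps)
      moreover have "word_coeff (Z @ [(a, b)]) rho \<noteq> 0"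
        using Z(3) step(2) unfolding shift word_coeff_append by simp
      ultimately show ?thesis using Z(1) ab(1,3) by (intro bexI[of _ "Z @ [(a, b)]"]) auto
    qed
  qed
qed

text \<open>The coefficient function of \<open>y(\<mu>)\<close> in \<open>N(\<lambda>)\<close>; it is \<open>0\<close> when \<open>y(\<mu>) \<notin> N(\<lambda>)\<close>.\<close>

definition Nbasis :: "nat \<Rightarrow> (nat \<Rightarrow> complex) \<Rightarrow> (nat \<Rightarrow> complex) \<Rightarrow> (nat \<Rightarrow> complex) \<Rightarrow> complex" where
  "Nbasis n lam mu = (\<lambda>nu. if nu = mu \<and> mu \<in> Sset n lam \<and> wsum n mu = wsum n lam then 1 else 0)"

lemma NE_Nbasis:
  assumes "a \<in> {1..n}" "b \<in> {1..n}" "rho \<in> Shull n lam"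
  shows "NE n lam a b (Nbasis n lam rho) = (\<lambda>mu. rho b * Nbasis n lam (shift rho a b) mu)"
proof
  fix mu
  have shift_inv: "shift mu b a = rho \<longleftrightarrow> mu = shift rho a b"
    by (auto simp: shift_def fun_eq_iff algebra_simps)
  show "NE n lam a b (Nbasis n lam rho) mu = rho b * Nbasis n lam (shift rho a b) mu"
  proof (cases "mu = shift rho a b \<and> rho b \<noteq> 0")
    case True
    then have "mu \<in> Sset n lam \<Longrightarrow> rho \<in> Sset n lam"
      using Sset_if_shift_in_Sset[OF assms(3) _ _ assms(1,2)] by blast
    then show ?thesis
      using True shift_inv wsum_shift[OF assms(1,2), of rho] by (auto simp: NE_def Nbasis_def)
  qed (use shift_inv in \<open>auto simp: NE_def Nbasis_def\<close>)
qed

lemma word_wt_in_Shull: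
  "rho \<in> Shull n lam \<Longrightarrow> X \<in> lists (letters n) \<Longrightarrow> word_coeff X rho \<noteq> 0 \<Longrightarrow>
    rho + word_wt X \<in> Shull n lam"
proof (induction X)
  case (Cons p X)
  obtain a b where p: "p = (a, b)" by fastforce
  have "rho + word_wt X \<in> Shull n lam" "(rho + word_wt X) b \<noteq> 0" "a \<in> {1..n}" "b \<in> {1..n}"
    using Cons by (auto simp: p plus_fun_def)
  then have "shift (rho + word_wt X) a b \<in> Shull n lam" by (rule shift_in_Shull)
  moreover have "shift (rho + word_wt X) a b = rho + word_wt (p # X)"
    by (simp add: p shift_def fun_eq_iff)
  ultimately show ?case by (simp add: plus_fun_def)
qed simp

lemma NE_scale: "NE n lam a b (\<lambda>mu. c * f mu) = (\<lambda>mu. c * NE n lam a b f mu)"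
  by (auto simp: NE_def fun_eq_iff)

lemma NE_sum: "NE n lam a b (\<lambda>mu. \<Sum>x\<in>A. g x mu) = (\<lambda>mu. \<Sum>x\<in>A. NE n lam a b (g x) mu)"
  by (auto simp: NE_def fun_eq_iff sum_distrib_left)

lemma word_act_NE_Nbasis:
  assumes "rho \<in> Shull n lam"
  shows "X \<in> lists (letters n) \<Longrightarrow>
    word_act (NE n lam) X (Nbasis n lam rho) = (\<lambda>mu. word_coeff X rho * Nbasis n lam (rho + word_wt X) mu)"
proof (induction X)
  case Nil
  then show ?case by simp
next
  case (Cons p X)
  obtain a b where p: "p = (a, b)" by fastforce
  define s where "s = rho + word_wt X"
  have ab: "a \<in> {1..n}" "b \<in> {1..n}" and X: "X \<in> lists (letters n)" using Cons.prems p by auto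
  have "word_act (NE n lam) (p # X) (Nbasis n lam rho) =
      (\<lambda>mu. word_coeff X rho * NE n lam a b (Nbasis n lam s) mu)"
    using Cons.IH[OF X] by (simp add: p s_def NE_scale plus_fun_def)
  also have "\<dots> = (\<lambda>mu. word_coeff (p # X) rho * Nbasis n lam (rho + word_wt (p # X)) mu)"
  proof (cases "word_coeff X rho = 0")
    case False
    then have "s \<in> Shull n lam" using word_wt_in_Shull[OF assms X] by (simp add: s_def)
    moreover have "shift s a b = rho + word_wt (p # X)" by (simp add: p s_def shift_def fun_eq_iff)
    ultimately show ?thesis by (simp add: NE_Nbasis[OF ab] p s_def mult_ac)
  qed (simp add: p)
  finally show ?case .
qed

section \<open>The isomorphism\<close>

locale simple_oscillator_module = oscillator_module +
  fixes v0 and lam :: "nat \<Rightarrow> complex"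
  assumes v0_nonzero: "v0 \<noteq> 0" and v0_weight: "v0 \<in> weight_space lam"
    and lam_Sset: "lam \<in> Sset n lam"
    and simple: "gl_submodule n sc E W \<Longrightarrow> W = {0} \<or> W = UNIV"
begin

definition word_comb :: "((nat \<times> nat) list \<Rightarrow> complex) \<Rightarrow> bool" where
  "word_comb r \<longleftrightarrow> finite {X. r X \<noteq> 0} \<and> {X. r X \<noteq> 0} \<subseteq> lists (letters n)"

abbreviation eval_V where
  "eval_V \<equiv> lincomb sc (\<lambda>X. word_act E X v0)"

definition eval_N :: "((nat \<times> nat) list \<Rightarrow> complex) \<Rightarrow> (nat \<Rightarrow> complex) \<Rightarrow> complex" where
  "eval_N r mu = lincomb (*) (\<lambda>X. word_act (NE n lam) X (Nbasis n lam lam) mu) r"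

lemma word_comb_add:
  assumes "word_comb r" "word_comb r'" shows "word_comb (\<lambda>X. r X + r' X)"
proof -
  have "{X. r X + r' X \<noteq> 0} \<subseteq> {X. r X \<noteq> 0} \<union> {X. r' X \<noteq> 0}" by auto
  with assms show ?thesis unfolding word_comb_def by (meson finite_Un finite_subset le_sup_iff order_trans)
qed

lemma word_comb_diff:
  assumes "word_comb r" "word_comb r'" shows "word_comb (\<lambda>X. r X - r' X)"
proof -
  have "{X. r X - r' X \<noteq> 0} \<subseteq> {X. r X \<noteq> 0} \<union> {X. r' X \<noteq> 0}" by auto
  with assms show ?thesis unfolding word_comb_def by (meson finite_Un finite_subset le_sup_iff order_trans)
qed

lemma word_comb_scale: "word_comb r \<Longrightarrow> word_comb (\<lambda>X. c * r X)"
  unfolding word_comb_def by (auto elim: rev_finite_subset)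

lemma word_comb_cons_comb: "word_comb r \<Longrightarrow> p \<in> letters n \<Longrightarrow> word_comb (cons_comb p r)"
  unfolding word_comb_def cons_comb_support by (fastforce simp: subset_iff)

lemma word_comb_indicator: "X \<in> lists (letters n) \<Longrightarrow> word_comb (\<lambda>Y. if Y = X then 1 else 0)"
  unfolding word_comb_def by auto

lemma eval_V_cons_comb:
  assumes "a \<in> {1..n}" "b \<in> {1..n}"
  shows "eval_V (cons_comb (a, b) r) = E a b (eval_V r)"
proof -
  interpret Eab: Vector_Spaces.linear sc sc "E a b" by (rule E_linear[OF assms])
  show ?thesis unfolding lincomb_cons_comb by (simp add: lincomb_def Eab.sum Eab.scale)
qed

lemma eval_N_cons_comb: "eval_N (cons_comb (a, b) r) = NE n lam a b (eval_N r)"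
  unfolding eval_N_def lincomb_cons_comb by (simp add: lincomb_def NE_sum NE_scale)

lemma eval_V_surj: "\<exists>r. word_comb r \<and> eval_V r = v"
proof -
  define W where "W = {eval_V r | r. word_comb r}"
  have sub: "gl_submodule n sc E W"
    unfolding gl_submodule_def subspace_def
  proof (intro conjI ballI allI)
    have "word_comb (\<lambda>_. 0)" "eval_V (\<lambda>_. 0) = 0" by (simp_all add: word_comb_def lincomb_def)
    then show "0 \<in> W" unfolding W_def by (intro CollectI exI[of _ "\<lambda>_. 0"]) simp
  next
    fix x y assume "x \<in> W" "y \<in> W"
    then obtain r r' where r: "word_comb r" "word_comb r'" "x = eval_V r" "y = eval_V r'"
      unfolding W_def by blast
    then have "x + y = eval_V (\<lambda>X. r X + r' X)" by (simp add: lincomb_add word_comb_def)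
    with word_comb_add[OF r(1,2)] show "x + y \<in> W" unfolding W_def by blast
  next
    fix c x assume "x \<in> W"
    then obtain r where r: "word_comb r" "x = eval_V r" unfolding W_def by blast
    then have "sc c x = eval_V (\<lambda>X. c * r X)" by (simp add: lincomb_scale word_comb_def)
    with word_comb_scale[OF r(1)] show "sc c x \<in> W" unfolding W_def by blast
  next
    fix l j w assume "l \<in> {1..n}" "j \<in> {1..n}" "w \<in> W"
    then obtain r where r: "word_comb r" "w = eval_V r" unfolding W_def by blast
    then have "E l j w = eval_V (cons_comb (l, j) r)"
      using eval_V_cons_comb \<open>l \<in> {1..n}\<close> \<open>j \<in> {1..n}\<close> by simp
    moreover have "word_comb (cons_comb (l, j) r)"
      using word_comb_cons_comb[OF r(1)] \<open>l \<in> {1..n}\<close> \<open>j \<in> {1..n}\<close> by simp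
    ultimately show "E l j w \<in> W" unfolding W_def by blast
  qed
  have "v0 \<in> W"
    unfolding W_def using word_comb_indicator[of "[]"]
    by (intro CollectI exI[of _ "\<lambda>Y. if Y = [] then 1 else 0"]) (simp add: lincomb_indicator)
  then have "W = UNIV" using simple[OF sub] v0_nonzero by blast
  then have "v \<in> W" by simp
  then show ?thesis unfolding W_def by blast
qed

lemma lam_Shull: "lam \<in> Shull n lam"
  using lam_Sset Sset_subset_Shull by blast

lemma eval_N_apply:
  assumes "word_comb r"
  shows "eval_N r mu = (if mu \<in> Sset n lam \<and> wsum n mu = wsum n lam
    then (\<Sum>X | r X \<noteq> 0 \<and> lam + word_wt X = mu. r X * word_coeff X lam) else 0)"
proof -
  have fin: "finite {X. r X \<noteq> 0}" and words: "r X \<noteq> 0 \<Longrightarrow> X \<in> lists (letters n)" for X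
    using assms by (auto simp: word_comb_def)
  have "eval_N r mu = (\<Sum>X | r X \<noteq> 0. r X * (word_coeff X lam * Nbasis n lam (lam + word_wt X) mu))"
    unfolding eval_N_def lincomb_def
    by (intro sum.cong) (simp_all add: word_act_NE_Nbasis[OF lam_Shull words])
  also have "\<dots> = (\<Sum>X | r X \<noteq> 0. if lam + word_wt X = mu \<and> mu \<in> Sset n lam \<and> wsum n mu = wsum n lam
      then r X * word_coeff X lam else 0)"
    by (intro sum.cong) (auto simp: Nbasis_def)
  also have "\<dots> = (if mu \<in> Sset n lam \<and> wsum n mu = wsum n lam
      then (\<Sum>X | r X \<noteq> 0 \<and> lam + word_wt X = mu. r X * word_coeff X lam) else 0)"
    using sum.inter_filter[OF fin, of "\<lambda>X. r X * word_coeff X lam" "\<lambda>X. lam + word_wt X = mu"]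
    by auto
  finally show ?thesis .
qed

lemma weight_component_eq_0:
  assumes "word_comb r" "eval_V r = 0"
  shows "(\<Sum>X | r X \<noteq> 0 \<and> lam + word_wt X = mu. sc (r X) (word_act E X v0)) = 0"
proof -
  define C where "C = {X. r X \<noteq> 0}"
  define p where "p nu = (\<Sum>X | X \<in> C \<and> lam + word_wt X = nu. sc (r X) (word_act E X v0))" for nu
  have fin: "finite C" and words: "X \<in> C \<Longrightarrow> X \<in> lists (letters n)" for X
    using assms(1) by (auto simp: word_comb_def C_def)
  define L where "L = (\<lambda>X. lam + word_wt X) ` C"
  have "sum p L = 0"
    using assms(2) sum.image_gen[OF fin, of "\<lambda>X. sc (r X) (word_act E X v0)" "\<lambda>X. lam + word_wt X"]
    by (simp add: lincomb_def C_def p_def L_def)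
  moreover have "E j j (p nu) = sc (nu j) (p nu)" if "nu \<in> L" "j \<in> {1..n}" for nu j
  proof -
    have "p nu \<in> weight_space nu"
      unfolding p_def using subspace_weight_space
      by (intro subspace_sum subspace_scale) (auto intro: word_act_in_weight_space[OF v0_weight words])
    with that(2) show ?thesis by (simp add: weight_space_def)
  qed
  moreover have "\<exists>j\<in>{1..n}. nu j \<noteq> nu' j" if "nu \<in> L" "nu' \<in> L" "nu \<noteq> nu'" for nu nu'
  proof -
    have "nu k = 0" "nu' k = 0" if "k \<notin> {1..n}" for k
      using \<open>nu \<in> L\<close> \<open>nu' \<in> L\<close> that lam_Sset word_wt_outside[OF words]
      by (auto simp: Sset_def L_def)
    with \<open>nu \<noteq> nu'\<close> show ?thesis by (metis ext)
  qed
  ultimately have "\<forall>nu \<in> L. p nu = 0"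
    using joint_eigenvectors_sum_eq_0[of L "{1..n}" "\<lambda>j. E j j" p "\<lambda>nu j. nu j"] fin E_linear
    by (simp add: L_def)
  moreover have "p mu = 0" if "mu \<notin> L"
    using that unfolding p_def L_def by (auto intro!: sum.neutral)
  ultimately have "p mu = 0" by blast
  then show ?thesis by (simp add: p_def C_def)
qed

lemma weight_component_coeff_eq_0:
  assumes "word_comb r" "mu \<in> Sset n lam" "wsum n mu = wsum n lam"
    and "(\<Sum>X | r X \<noteq> 0 \<and> lam + word_wt X = mu. sc (r X) (word_act E X v0)) = 0"
  shows "(\<Sum>X | r X \<noteq> 0 \<and> lam + word_wt X = mu. r X * word_coeff X lam) = 0"
proof -
  define A where "A = {X. r X \<noteq> 0 \<and> lam + word_wt X = mu}"
  obtain Z where Z: "Z \<in> lists (letters n)" "mu + word_wt Z = lam" "word_coeff Z mu \<noteq> 0"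
    using Sset_connected[OF assms(2) lam_Sset assms(3)] by blast
  interpret Z: Vector_Spaces.linear sc sc "word_act E Z" by (rule word_act_linear[OF Z(1)])
  have act: "word_act E (Z @ X) v0 = sc (word_coeff Z mu * word_coeff X lam) v0" if "X \<in> A" for X
  proof -
    have X: "X \<in> lists (letters n)" "lam + word_wt X = mu"
      using that assms(1) by (auto simp: A_def word_comb_def)
    have "lam + (word_wt Z + word_wt X) = lam + 0"
      using X(2) Z(2) by (simp add: add.assoc[symmetric] add.commute)
    then have "word_wt (Z @ X) = 0" unfolding word_wt_append by (rule add_left_imp_eq)
    then have "word_act E (Z @ X) v0 = sc (word_coeff (Z @ X) lam) v0"
      using word_act_zero_weight[OF v0_weight] Z(1) X(1) by simp
    then show ?thesis using X(2) by (simp add: word_coeff_append add.commute)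
  qed
  have "0 = word_act E Z (\<Sum>X\<in>A. sc (r X) (word_act E X v0))"
    using assms(4) by (simp add: A_def Z.zero)
  also have "\<dots> = (\<Sum>X\<in>A. sc (r X) (word_act E (Z @ X) v0))"
    by (simp add: Z.sum Z.scale word_act_append)
  also have "\<dots> = (\<Sum>X\<in>A. sc (word_coeff Z mu * (r X * word_coeff X lam)) v0)"
    using act by (intro sum.cong) (simp_all add: mult_ac)
  also have "\<dots> = sc (word_coeff Z mu * (\<Sum>X\<in>A. r X * word_coeff X lam)) v0"
    by (simp add: scale_sum_left sum_distrib_left)
  finally show ?thesis
    using v0_nonzero Z(3) by (simp add: A_def)
qed

lemma eval_N_eq_0_if_eval_V_eq_0: "word_comb r \<Longrightarrow> eval_V r = 0 \<Longrightarrow> eval_N r = (\<lambda>_. 0)"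
  by (auto simp: eval_N_apply weight_component_coeff_eq_0 weight_component_eq_0)

definition phi where
  "phi v = eval_N (SOME r. word_comb r \<and> eval_V r = v)"

lemma phi_eval_V:
  assumes "word_comb r"
  shows "phi (eval_V r) = eval_N r"
proof -
  define r' where "r' = (SOME r'. word_comb r' \<and> eval_V r' = eval_V r)"
  have r': "word_comb r'" "eval_V r' = eval_V r"
    unfolding r'_def using someI_ex[OF eval_V_surj[of "eval_V r"]] by auto
  have fin: "finite {X. r X \<noteq> 0}" "finite {X. r' X \<noteq> 0}"
    using assms r'(1) by (simp_all add: word_comb_def)
  have "eval_V (\<lambda>X. r' X - r X) = 0"
    using r'(2) by (simp add: lincomb_diff[OF fin(2,1)])
  then have "eval_N (\<lambda>X. r' X - r X) = (\<lambda>_. 0)"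
    by (intro eval_N_eq_0_if_eval_V_eq_0 word_comb_diff r'(1) assms)
  then show ?thesis
    using module.lincomb_diff[OF module_mult fin(2,1)]
    by (simp add: phi_def r'_def[symmetric] eval_N_def fun_eq_iff)
qed

lemma phi_add: "phi (u + v) = (\<lambda>mu. phi u mu + phi v mu)"
proof -
  obtain r r' where r: "word_comb r" "eval_V r = u" and r': "word_comb r'" "eval_V r' = v"
    using eval_V_surj by meson
  have fin: "finite {X. r X \<noteq> 0}" "finite {X. r' X \<noteq> 0}"
    using r(1) r'(1) by (simp_all add: word_comb_def)
  have "u + v = eval_V (\<lambda>X. r X + r' X)" using r r' lincomb_add[OF fin] by simp
  then show ?thesis
    using r r' phi_eval_V word_comb_add module.lincomb_add[OF module_mult fin]
    by (auto simp: eval_N_def)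
qed

lemma phi_scale: "phi (sc c v) = (\<lambda>mu. c * phi v mu)"
proof -
  obtain r where r: "word_comb r" "eval_V r = v" using eval_V_surj by meson
  have fin: "finite {X. r X \<noteq> 0}" using r(1) by (simp add: word_comb_def)
  have "sc c v = eval_V (\<lambda>X. c * r X)" using r lincomb_scale[OF fin] by simp
  then show ?thesis
    using r phi_eval_V word_comb_scale module.lincomb_scale[OF module_mult fin]
    by (auto simp: eval_N_def)
qed

lemma phi_E:
  assumes "a \<in> {1..n}" "b \<in> {1..n}"
  shows "phi (E a b v) = NE n lam a b (phi v)"
proof -
  obtain r where r: "word_comb r" "eval_V r = v" using eval_V_surj by meson
  have "E a b v = eval_V (cons_comb (a, b) r)" using eval_V_cons_comb[OF assms] r(2) by simp
  then have "phi (E a b v) = eval_N (cons_comb (a, b) r)"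
    using phi_eval_V word_comb_cons_comb[OF r(1)] assms by simp
  also have "\<dots> = NE n lam a b (eval_N r)" by (rule eval_N_cons_comb)
  also have "eval_N r = phi v" using phi_eval_V[OF r(1)] r(2) by simp
  finally show ?thesis .
qed

lemma phi_zero: "phi 0 = (\<lambda>_. 0)"
  using phi_add[of 0 0] by (simp add: fun_eq_iff)

lemma phi_sum: "phi (sum g A) = (\<lambda>mu. \<Sum>x\<in>A. phi (g x) mu)"
  by (induction A rule: infinite_finite_induct) (simp_all add: phi_zero phi_add)

lemma phi_word_act:
  assumes "X \<in> lists (letters n)"
  shows "phi (word_act E X v0) = (\<lambda>mu. word_coeff X lam * Nbasis n lam (lam + word_wt X) mu)"
proof -
  have "phi (word_act E X v0) = eval_N (\<lambda>Y. if Y = X then 1 else 0)"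
    using phi_eval_V[OF word_comb_indicator[OF assms]] by (simp add: lincomb_indicator)
  then show ?thesis
    by (simp add: fun_eq_iff eval_N_def module.lincomb_indicator[OF module_mult]
        word_act_NE_Nbasis[OF lam_Shull assms])
qed

lemma phi_inj: "inj phi"
proof -
  define K where "K = {v. phi v = (\<lambda>_. 0)}"
  have "gl_submodule n sc E K"
    unfolding gl_submodule_def subspace_def K_def
    by (simp add: phi_zero phi_add phi_scale phi_E NE_def fun_eq_iff)
  moreover have "phi v0 lam = 1"
    using phi_word_act[of "[]"] lam_Sset by (simp add: Nbasis_def)
  then have "v0 \<notin> K" by (auto simp: K_def)
  ultimately have K: "K = {0}" using simple by blast
  show ?thesis
  proof (rule injI)
    fix u v assume "phi u = phi v"
    then have "u - v \<in> K" using phi_add[of "u - v" v] by (simp add: K_def fun_eq_iff)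
    with K show "u = v" by simp
  qed
qed

lemma phi_in_Nspace: "phi v \<in> Nspace n lam"
proof -
  obtain r where r: "word_comb r" "eval_V r = v" using eval_V_surj by meson
  then have "phi v = eval_N r" using phi_eval_V by blast
  moreover have "{mu. eval_N r mu \<noteq> 0} \<subseteq> (\<lambda>X. lam + word_wt X) ` {X. r X \<noteq> 0}"
    using r(1) by (auto simp: eval_N_apply elim: sum.not_neutral_contains_not_neutral)
  moreover have "finite {X. r X \<noteq> 0}" using r(1) by (simp add: word_comb_def)
  ultimately show ?thesis
    unfolding Nspace_def using r(1) by (auto simp: eval_N_apply elim: finite_surj split: if_splits)
qed

lemma phi_surj:
  assumes "f \<in> Nspace n lam"
  shows "f \<in> range phi"
proof -
  define F where "F = {mu. f mu \<noteq> 0}"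
  have F: "finite F" "mu \<in> F \<Longrightarrow> mu \<in> Sset n lam \<and> wsum n mu = wsum n lam" for mu
    using assms by (auto simp: Nspace_def F_def)
  define Z where "Z mu = (SOME Z. Z \<in> lists (letters n) \<and> lam + word_wt Z = mu \<and> word_coeff Z lam \<noteq> 0)"
    for mu
  have Z: "Z mu \<in> lists (letters n)" "lam + word_wt (Z mu) = mu" "word_coeff (Z mu) lam \<noteq> 0"
    if "mu \<in> F" for mu
  proof -
    have "\<exists>Z. Z \<in> lists (letters n) \<and> lam + word_wt Z = mu \<and> word_coeff Z lam \<noteq> 0"
      using Sset_connected[OF lam_Sset, of mu] F(2)[OF that] by auto
    then show "Z mu \<in> lists (letters n)" "lam + word_wt (Z mu) = mu" "word_coeff (Z mu) lam \<noteq> 0"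
      unfolding Z_def by (metis (mono_tags, lifting) someI_ex)+
  qed
  define v where "v = (\<Sum>mu\<in>F. sc (f mu / word_coeff (Z mu) lam) (word_act E (Z mu) v0))"
  have "phi v nu = f nu" for nu
  proof -
    have "phi v nu = (\<Sum>mu\<in>F. f mu * Nbasis n lam mu nu)"
      unfolding v_def phi_sum phi_scale using Z by (intro sum.cong) (simp_all add: phi_word_act)
    also have "\<dots> = (\<Sum>mu\<in>F. if mu = nu then f mu else 0)"
      using F(2) by (intro sum.cong) (auto simp: Nbasis_def)
    also have "\<dots> = f nu" using F(1) by (simp add: F_def)
    finally show ?thesis .
  qed
  then show ?thesis by (metis rangeI ext)
qed

lemma isomorphic_to_N: "iso_to_N n sc E lam"
  unfolding iso_to_N_def bij_betw_def
  using phi_add phi_scale phi_E phi_inj phi_in_Nspace phi_surj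
  by (intro exI[of _ phi]) auto

end

theorem lemma2p5:
  fixes n :: nat and sc :: "complex \<Rightarrow> 'v::ab_group_add \<Rightarrow> 'v"
    and E :: "nat \<Rightarrow> nat \<Rightarrow> 'v \<Rightarrow> 'v"
  assumes "n \<ge> 2"
    and "glrep n sc E"
    and "weight_gl_module n sc E"
    and "simple_gl_module n sc E"
    and "\<forall>l\<in>{1..n}. \<forall>j\<in>{1..n}. l \<noteq> j \<longrightarrow>
           (\<forall>v. E l l v - E l j (E j l v) + E j j (E l l v) = 0)"
  shows "\<exists>lam. iso_to_N n sc E lam"
proof -
  have "vector_space sc" "\<And>l j. l \<in> {1..n} \<Longrightarrow> j \<in> {1..n} \<Longrightarrow> Vector_Spaces.linear sc sc (E l j)"
    using assms(2) unfolding glrep_def by auto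
  with assms(2,5) interpret oscillator_module sc n E
    unfolding glrep_def
    by (intro oscillator_module.intro gl_module.intro gl_module_axioms.intro
        oscillator_module_axioms.intro) blast+
  obtain u :: 'v where "u \<noteq> 0" using assms(4) by (auto simp: simple_gl_module_def)
  then obtain v0 mu where v0: "v0 \<noteq> 0" "v0 \<in> weight_space mu"
    using weight_vector_exists assms(3) by (auto simp: weight_gl_module_def)
  define lam where "lam k = (if k \<in> {1..n} then mu k else 0)" for k
  have "v0 \<in> weight_space lam" using v0(2) by (simp add: weight_space_def lam_def)
  moreover have "lam \<in> Sset n lam" by (simp add: Sset_def lam_def Xset_self)
  ultimately interpret simple_oscillator_module sc n E v0 lam
    using v0(1) assms(4) by unfold_locales (auto simp: simple_gl_module_def)
  show ?thesis using isomorphic_to_N by blast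
qed

end
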